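(* Let $X$ be a locally compact Hausdorff space. The category $\mathsf{Point}_X$ of pointed extensions of $X$ has the following properties: it is a poset; it admits small colimits, in particular it has an initial object; it admits small limits, in particular it has a final object; and products distribute over small colimits.
   Context: A pointed extension $X_\ast$ of $X$ is a compactly generated Hausdorff topology on the underlying set of $\ast\amalg X$ extending the given topology on $X$. $\mathsf{Point}_X$ is the full subcategory of the undercategory $\mathrm{Top}^{X_+/}$ (where $X_+$ is $X$ with a disjoint basepoint) consisting of the pointed extensions of $X$. *)

theory Defs
  imports "HOL-Analysis.Analysis"
begin

record ('o, 'm) cat =
  cob  :: "'o set"
  chom :: "'o \<Rightarrow> 'o \<Rightarrow> 'm set"
  cid  :: "'o \<Rightarrow> 'm"
  ccomp :: "'m \<Rightarrow> 'm \<Rightarrow> 'm"   (* ccomp C g f = g after f *)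

definition category :: "('o, 'm) cat \<Rightarrow> bool" where
  "category C \<longleftrightarrow>
     (\<forall>A\<in>cob C. cid C A \<in> chom C A A) \<and>
     (\<forall>A\<in>cob C. \<forall>B\<in>cob C. \<forall>D\<in>cob C. \<forall>f\<in>chom C A B. \<forall>g\<in>chom C B D.
         ccomp C g f \<in> chom C A D) \<and>
     (\<forall>A\<in>cob C. \<forall>B\<in>cob C. \<forall>f\<in>chom C A B.
         ccomp C (cid C B) f = f \<and> ccomp C f (cid C A) = f) \<and>
     (\<forall>A\<in>cob C. \<forall>B\<in>cob C. \<forall>D\<in>cob C. \<forall>E\<in>cob C.
        \<forall>f\<in>chom C A B. \<forall>g\<in>chom C B D. \<forall>h\<in>chom C D E.
         ccomp C h (ccomp C g f) = ccomp C (ccomp C h g) f)"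

text \<open>A functor (diagram) \<open>J \<rightarrow> C\<close> given by an object map and an arrow map
  (the arrow map also receives source and target, since hom-sets may overlap).\<close>
definition is_functor :: "('j, 'b) cat \<Rightarrow> ('o, 'm) cat \<Rightarrow> ('j \<Rightarrow> 'o) \<Rightarrow> ('j \<Rightarrow> 'j \<Rightarrow> 'b \<Rightarrow> 'm) \<Rightarrow> bool" where
  "is_functor J C Fo Fa \<longleftrightarrow>
     (\<forall>i\<in>cob J. Fo i \<in> cob C) \<and>
     (\<forall>i\<in>cob J. \<forall>j\<in>cob J. \<forall>f\<in>chom J i j. Fa i j f \<in> chom C (Fo i) (Fo j)) \<and>
     (\<forall>i\<in>cob J. Fa i i (cid J i) = cid C (Fo i)) \<and>
     (\<forall>i\<in>cob J. \<forall>j\<in>cob J. \<forall>k\<in>cob J. \<forall>f\<in>chom J i j. \<forall>g\<in>chom J j k.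
        Fa i k (ccomp J g f) = ccomp C (Fa j k g) (Fa i j f))"

definition is_cocone :: "('o, 'm) cat \<Rightarrow> ('j, 'b) cat \<Rightarrow> ('j \<Rightarrow> 'o) \<Rightarrow> ('j \<Rightarrow> 'j \<Rightarrow> 'b \<Rightarrow> 'm)
     \<Rightarrow> 'o \<Rightarrow> ('j \<Rightarrow> 'm) \<Rightarrow> bool" where
  "is_cocone C J Fo Fa L lam \<longleftrightarrow> L \<in> cob C \<and>
     (\<forall>j\<in>cob J. lam j \<in> chom C (Fo j) L) \<and>
     (\<forall>i\<in>cob J. \<forall>j\<in>cob J. \<forall>f\<in>chom J i j. ccomp C (lam j) (Fa i j f) = lam i)"

definition is_colimit :: "('o, 'm) cat \<Rightarrow> ('j, 'b) cat \<Rightarrow> ('j \<Rightarrow> 'o) \<Rightarrow> ('j \<Rightarrow> 'j \<Rightarrow> 'b \<Rightarrow> 'm)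
     \<Rightarrow> 'o \<Rightarrow> ('j \<Rightarrow> 'm) \<Rightarrow> bool" where
  "is_colimit C J Fo Fa L lam \<longleftrightarrow> is_cocone C J Fo Fa L lam \<and>
     (\<forall>L' mu. is_cocone C J Fo Fa L' mu \<longrightarrow>
        (\<exists>!u. u \<in> chom C L L' \<and> (\<forall>j\<in>cob J. ccomp C u (lam j) = mu j)))"

definition is_cone :: "('o, 'm) cat \<Rightarrow> ('j, 'b) cat \<Rightarrow> ('j \<Rightarrow> 'o) \<Rightarrow> ('j \<Rightarrow> 'j \<Rightarrow> 'b \<Rightarrow> 'm)
     \<Rightarrow> 'o \<Rightarrow> ('j \<Rightarrow> 'm) \<Rightarrow> bool" where
  "is_cone C J Fo Fa L lam \<longleftrightarrow> L \<in> cob C \<and>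
     (\<forall>j\<in>cob J. lam j \<in> chom C L (Fo j)) \<and>
     (\<forall>i\<in>cob J. \<forall>j\<in>cob J. \<forall>f\<in>chom J i j. ccomp C (Fa i j f) (lam i) = lam j)"

definition is_limit :: "('o, 'm) cat \<Rightarrow> ('j, 'b) cat \<Rightarrow> ('j \<Rightarrow> 'o) \<Rightarrow> ('j \<Rightarrow> 'j \<Rightarrow> 'b \<Rightarrow> 'm)
     \<Rightarrow> 'o \<Rightarrow> ('j \<Rightarrow> 'm) \<Rightarrow> bool" where
  "is_limit C J Fo Fa L lam \<longleftrightarrow> is_cone C J Fo Fa L lam \<and>
     (\<forall>L' mu. is_cone C J Fo Fa L' mu \<longrightarrow>
        (\<exists>!u. u \<in> chom C L' L \<and> (\<forall>j\<in>cob J. ccomp C (lam j) u = mu j)))"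

definition has_colimits_of_shape :: "('o, 'm) cat \<Rightarrow> ('j, 'b) cat \<Rightarrow> bool" where
  "has_colimits_of_shape C J \<longleftrightarrow>
     (\<forall>Fo Fa. is_functor J C Fo Fa \<longrightarrow> (\<exists>L lam. is_colimit C J Fo Fa L lam))"

definition has_limits_of_shape :: "('o, 'm) cat \<Rightarrow> ('j, 'b) cat \<Rightarrow> bool" where
  "has_limits_of_shape C J \<longleftrightarrow>
     (\<forall>Fo Fa. is_functor J C Fo Fa \<longrightarrow> (\<exists>L lam. is_limit C J Fo Fa L lam))"

definition is_poset_cat :: "('o, 'm) cat \<Rightarrow> bool" where
  "is_poset_cat C \<longleftrightarrow>
     (\<forall>A\<in>cob C. \<forall>B\<in>cob C. \<forall>f\<in>chom C A B. \<forall>g\<in>chom C A B. f = g) \<and>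
     (\<forall>A\<in>cob C. \<forall>B\<in>cob C. chom C A B \<noteq> {} \<and> chom C B A \<noteq> {} \<longrightarrow> A = B)"

definition initial_object :: "('o, 'm) cat \<Rightarrow> 'o \<Rightarrow> bool" where
  "initial_object C I \<longleftrightarrow> I \<in> cob C \<and> (\<forall>A\<in>cob C. \<exists>!f. f \<in> chom C I A)"

definition terminal_object :: "('o, 'm) cat \<Rightarrow> 'o \<Rightarrow> bool" where
  "terminal_object C T \<longleftrightarrow> T \<in> cob C \<and> (\<forall>A\<in>cob C. \<exists>!f. f \<in> chom C A T)"

definition is_product :: "('o, 'm) cat \<Rightarrow> 'o \<Rightarrow> 'o \<Rightarrow> 'o \<Rightarrow> 'm \<Rightarrow> 'm \<Rightarrow> bool" where
  "is_product C A B P p1 p2 \<longleftrightarrow> P \<in> cob C \<and> p1 \<in> chom C P A \<and> p2 \<in> chom C P B \<and>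
     (\<forall>Z\<in>cob C. \<forall>f\<in>chom C Z A. \<forall>g\<in>chom C Z B.
        \<exists>!u. u \<in> chom C Z P \<and> ccomp C p1 u = f \<and> ccomp C p2 u = g)"

text \<open>Binary products distribute over colimits of shape \<open>J\<close>: for every object \<open>Y\<close>,
  every colimit cocone \<open>(L, lam)\<close> of a diagram \<open>D\<close>, every product \<open>Y \<times> L\<close> and every
  choice of products \<open>Y \<times> D j\<close>, the induced cocone \<open>(Y \<times> lam j)\<close> on the induced
  diagram \<open>Y \<times> D\<close> is a colimit cocone (i.e. \<open>Y \<times> -\<close> preserves the colimit).\<close>
definition products_distribute_over_shape :: "('o, 'm) cat \<Rightarrow> ('j, 'b) cat \<Rightarrow> bool" where
  "products_distribute_over_shape C J \<longleftrightarrow>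
     (\<forall>Y\<in>cob C. \<forall>Do Da L lam P p1 p2 Q q1 q2.
        is_functor J C Do Da \<and> is_colimit C J Do Da L lam \<and>
        is_product C Y L P p1 p2 \<and>
        (\<forall>j\<in>cob J. is_product C Y (Do j) (Q j) (q1 j) (q2 j)) \<longrightarrow>
        is_colimit C J Q
          (\<lambda>i j f. THE u. u \<in> chom C (Q i) (Q j) \<and> ccomp C (q1 j) u = q1 i \<and>
                           ccomp C (q2 j) u = ccomp C (Da i j f) (q2 i))
          P
          (\<lambda>j. THE u. u \<in> chom C (Q j) P \<and> ccomp C p1 u = q1 j \<and>
                      ccomp C p2 u = ccomp C (lam j) (q2 j)))"

text \<open>The underlying set of \<open>* \<amalg> X\<close>, with \<open>None\<close> the basepoint and \<open>Some x\<close> for \<open>x \<in> X\<close>.\<close>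
definition pt_carrier :: "'a topology \<Rightarrow> 'a option set" where
  "pt_carrier X = insert None (Some ` topspace X)"

text \<open>\<open>X\<^sub>+\<close>: \<open>X\<close> with a disjoint (isolated) basepoint.\<close>
definition plus_top :: "'a topology \<Rightarrow> 'a option topology" where
  "plus_top X = topology (\<lambda>U. U \<subseteq> pt_carrier X \<and> openin X {x. Some x \<in> U})"

text \<open>The structure map \<open>X\<^sub>+ \<rightarrow> X\<^sub>*\<close> is the identity of the underlying set.\<close>
definition pointed_extension :: "'a topology \<Rightarrow> 'a option topology \<Rightarrow> bool" where
  "pointed_extension X T \<longleftrightarrow>
     topspace T = pt_carrier X \<and>
     Hausdorff_space T \<and> k_space T \<and>
     embedding_map X T Some \<and>
     continuous_map (plus_top X) T (\<lambda>p. p)"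

text \<open>Morphisms of the undercategory \<open>Top\<^bsup>X\<^sub>+/\<^esup>\<close> between pointed extensions:
  continuous maps commuting with the structure maps from \<open>X\<^sub>+\<close> (as functions on the
  underlying set, i.e. extensional outside it).\<close>
definition Point :: "'a topology \<Rightarrow> ('a option topology, 'a option \<Rightarrow> 'a option) cat" where
  "Point X = \<lparr> cob = {T. pointed_extension X T},
     chom = (\<lambda>T T'. {f. continuous_map T T' f \<and>
                         (\<forall>p\<in>topspace (plus_top X). f p = p) \<and>
                         (\<forall>p. p \<notin> topspace T \<longrightarrow> f p = undefined)}),
     cid = (\<lambda>T. restrict (\<lambda>p. p) (topspace T)),
     ccomp = (\<lambda>g f. restrict (g \<circ> f) (pt_carrier X)) \<rparr>"

end

theory Submission
  imports Defs
begin

text \<open>Write \<open>A\<^sup>\<bottom>\<close> (\<open>perp X A\<close>) for the closed sets of \<open>X\<close> meeting every member of \<open>A\<close> in a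
  compact set. A pointed extension \<open>T\<close> is determined by the family of sets \<open>C\<close> with \<open>Some ` C\<close>
  closed in \<open>T\<close>, since the neighbourhoods of the basepoint are the complements of these sets.
  This family is \<open>\<bottom>\<bottom>\<close>-closed: the trace on \<open>X\<close> of a compact set of \<open>T\<close> lies in \<open>A\<^sup>\<bottom>\<close>, so a set
  of \<open>A\<^sup>\<bottom>\<^sup>\<bottom>\<close> meets compact sets of \<open>T\<close> compactly and is closed because \<open>T\<close> is a \<open>k\<close>-space.
  Conversely, for \<open>X\<close> locally compact Hausdorff every \<open>\<bottom>\<bottom>\<close>-closed family defines a Hausdorff
  \<open>k\<close>-space, the key point being that the basepoint together with a set of \<open>A\<^sup>\<bottom>\<close> is compact.

  A morphism of \<open>Point\<^sub>X\<close> is forced to be the identity, and it exists iff the family of the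
  target is contained in that of the source. So \<open>Point\<^sub>X\<close> is the opposite of the complete
  lattice of \<open>\<bottom>\<bottom>\<close>-closed families: colimits are intersections, limits are \<open>\<bottom>\<bottom>\<close>-closures of
  unions, and products distribute over colimits because
  \<open>\<Inter>\<^sub>j (A \<union> B\<^sub>j)\<^sup>\<bottom>\<^sup>\<bottom> \<subseteq> (A \<union> \<Inter>\<^sub>j B\<^sub>j)\<^sup>\<bottom>\<^sup>\<bottom>\<close>.\<close>

section \<open>Thin categories\<close>

locale thin_cat =
  fixes C :: "('o, 'm) cat" and le :: "'o \<Rightarrow> 'o \<Rightarrow> bool" and r :: 'm
  assumes chom_eq: "A \<in> cob C \<Longrightarrow> B \<in> cob C \<Longrightarrow> chom C A B = (if le A B then {r} else {})"
    and le_refl: "A \<in> cob C \<Longrightarrow> le A A"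
    and le_trans: "A \<in> cob C \<Longrightarrow> B \<in> cob C \<Longrightarrow> D \<in> cob C \<Longrightarrow> le A B \<Longrightarrow> le B D \<Longrightarrow> le A D"
    and cid_eq: "A \<in> cob C \<Longrightarrow> cid C A = r"
    and ccomp_eq: "ccomp C r r = r"
begin

lemma mem_chom_iff: "A \<in> cob C \<Longrightarrow> B \<in> cob C \<Longrightarrow> f \<in> chom C A B \<longleftrightarrow> f = r \<and> le A B"
  by (simp add: chom_eq)

lemma category: "category C"
  unfolding category_def by (auto simp: mem_chom_iff cid_eq ccomp_eq le_refl intro: le_trans)

lemma is_poset_catI:
  assumes "\<And>A B. A \<in> cob C \<Longrightarrow> B \<in> cob C \<Longrightarrow> le A B \<Longrightarrow> le B A \<Longrightarrow> A = B"
  shows "is_poset_cat C"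
  using assms by (auto simp: is_poset_cat_def chom_eq)

lemma initial_objectI: "I \<in> cob C \<Longrightarrow> (\<And>A. A \<in> cob C \<Longrightarrow> le I A) \<Longrightarrow> initial_object C I"
  by (auto simp: initial_object_def chom_eq)

lemma terminal_objectI: "T \<in> cob C \<Longrightarrow> (\<And>A. A \<in> cob C \<Longrightarrow> le A T) \<Longrightarrow> terminal_object C T"
  by (auto simp: terminal_object_def chom_eq)

lemma functor_arrow_eq:
  assumes "is_functor J C D Da" "i \<in> cob J" "j \<in> cob J" "f \<in> chom J i j"
  shows "Da i j f = r" and "le (D i) (D j)"
  using assms by (auto simp: is_functor_def mem_chom_iff)

lemma is_functorI:
  assumes "category J" and "\<And>j. j \<in> cob J \<Longrightarrow> D j \<in> cob C"
    and "\<And>i j f. i \<in> cob J \<Longrightarrow> j \<in> cob J \<Longrightarrow> f \<in> chom J i j \<Longrightarrow> le (D i) (D j) \<and> Da i j f = r"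
  shows "is_functor J C D Da"
  using assms cid_eq by (auto simp: is_functor_def category_def mem_chom_iff ccomp_eq)

lemma the_chom_eq:
  "A \<in> cob C \<Longrightarrow> B \<in> cob C \<Longrightarrow> le A B \<Longrightarrow> P r \<Longrightarrow> (THE u. u \<in> chom C A B \<and> P u) = r"
  by (auto simp: mem_chom_iff)

lemma is_cocone_iff:
  assumes D: "is_functor J C D Da"
  shows "is_cocone C J D Da L lam \<longleftrightarrow> L \<in> cob C \<and> (\<forall>j\<in>cob J. lam j = r \<and> le (D j) L)"
  using D functor_arrow_eq[OF D] by (auto simp: is_functor_def is_cocone_def mem_chom_iff ccomp_eq)

lemma is_colimit_iff:
  assumes D: "is_functor J C D Da"
  shows "is_colimit C J D Da L lam \<longleftrightarrow> is_cocone C J D Da L lam \<and>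
           (\<forall>L'\<in>cob C. (\<forall>j\<in>cob J. le (D j) L') \<longrightarrow> le L L')"
proof
  assume colim: "is_colimit C J D Da L lam"
  have "le L L'" if "L' \<in> cob C" "\<forall>j\<in>cob J. le (D j) L'" for L'
  proof -
    have "is_cocone C J D Da L' (\<lambda>_. r)"
      using that by (simp add: is_cocone_iff[OF D])
    then have "\<exists>!u. u \<in> chom C L L' \<and> (\<forall>j\<in>cob J. ccomp C u (lam j) = r)"
      using colim unfolding is_colimit_def by blast
    then obtain u where "u \<in> chom C L L'"
      by blast
    then show ?thesis
      using colim that(1) by (simp add: is_colimit_def is_cocone_iff[OF D] mem_chom_iff)
  qed
  then show "is_cocone C J D Da L lam \<and> (\<forall>L'\<in>cob C. (\<forall>j\<in>cob J. le (D j) L') \<longrightarrow> le L L')"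
    using colim by (simp add: is_colimit_def)
next
  assume "is_cocone C J D Da L lam \<and> (\<forall>L'\<in>cob C. (\<forall>j\<in>cob J. le (D j) L') \<longrightarrow> le L L')"
  then show "is_colimit C J D Da L lam"
    by (auto simp: is_colimit_def is_cocone_iff[OF D] mem_chom_iff ccomp_eq intro!: ex1I[of _ r])
qed

lemma is_cone_iff:
  assumes D: "is_functor J C D Da"
  shows "is_cone C J D Da L lam \<longleftrightarrow> L \<in> cob C \<and> (\<forall>j\<in>cob J. lam j = r \<and> le L (D j))"
  using D functor_arrow_eq[OF D] by (auto simp: is_functor_def is_cone_def mem_chom_iff ccomp_eq)

lemma is_limit_iff:
  assumes D: "is_functor J C D Da"
  shows "is_limit C J D Da L lam \<longleftrightarrow> is_cone C J D Da L lam \<and>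
           (\<forall>L'\<in>cob C. (\<forall>j\<in>cob J. le L' (D j)) \<longrightarrow> le L' L)"
proof
  assume lim: "is_limit C J D Da L lam"
  have "le L' L" if "L' \<in> cob C" "\<forall>j\<in>cob J. le L' (D j)" for L'
  proof -
    have "is_cone C J D Da L' (\<lambda>_. r)"
      using that by (simp add: is_cone_iff[OF D])
    then have "\<exists>!u. u \<in> chom C L' L \<and> (\<forall>j\<in>cob J. ccomp C (lam j) u = r)"
      using lim unfolding is_limit_def by blast
    then obtain u where "u \<in> chom C L' L"
      by blast
    then show ?thesis
      using lim that(1) by (simp add: is_limit_def is_cone_iff[OF D] mem_chom_iff)
  qed
  then show "is_cone C J D Da L lam \<and> (\<forall>L'\<in>cob C. (\<forall>j\<in>cob J. le L' (D j)) \<longrightarrow> le L' L)"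
    using lim by (simp add: is_limit_def)
next
  assume "is_cone C J D Da L lam \<and> (\<forall>L'\<in>cob C. (\<forall>j\<in>cob J. le L' (D j)) \<longrightarrow> le L' L)"
  then show "is_limit C J D Da L lam"
    by (auto simp: is_limit_def is_cone_iff[OF D] mem_chom_iff ccomp_eq intro!: ex1I[of _ r])
qed

lemma is_product_iff:
  assumes A: "A \<in> cob C" and B: "B \<in> cob C"
  shows "is_product C A B P p1 p2 \<longleftrightarrow> P \<in> cob C \<and> p1 = r \<and> p2 = r \<and> le P A \<and> le P B \<and>
           (\<forall>Z\<in>cob C. le Z A \<longrightarrow> le Z B \<longrightarrow> le Z P)"
proof
  assume prod: "is_product C A B P p1 p2"
  have "le Z P" if "Z \<in> cob C" "le Z A" "le Z B" for Z
  proof -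
    have "r \<in> chom C Z A" "r \<in> chom C Z B"
      using that A B by (simp_all add: mem_chom_iff)
    then have "\<exists>!u. u \<in> chom C Z P \<and> ccomp C p1 u = r \<and> ccomp C p2 u = r"
      using prod that(1) unfolding is_product_def by blast
    then obtain u where "u \<in> chom C Z P"
      by blast
    then show ?thesis
      using prod that(1) by (simp add: is_product_def mem_chom_iff)
  qed
  moreover have "P \<in> cob C" "p1 \<in> chom C P A" "p2 \<in> chom C P B"
    using prod by (simp_all add: is_product_def)
  ultimately show "P \<in> cob C \<and> p1 = r \<and> p2 = r \<and> le P A \<and> le P B \<and>
      (\<forall>Z\<in>cob C. le Z A \<longrightarrow> le Z B \<longrightarrow> le Z P)"
    using A B by (simp add: mem_chom_iff)
next
  assume "P \<in> cob C \<and> p1 = r \<and> p2 = r \<and> le P A \<and> le P B \<and>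
      (\<forall>Z\<in>cob C. le Z A \<longrightarrow> le Z B \<longrightarrow> le Z P)"
  then show "is_product C A B P p1 p2"
    using A B by (auto simp: is_product_def mem_chom_iff ccomp_eq intro!: ex1I[of _ r])
qed

lemma products_distribute_over_shapeI:
  assumes J: "category J"
    and least: "\<And>Y D Da L lam P p1 p2 Q q1 q2 L'. Y \<in> cob C \<Longrightarrow> is_functor J C D Da \<Longrightarrow>
      is_colimit C J D Da L lam \<Longrightarrow> is_product C Y L P p1 p2 \<Longrightarrow>
      \<forall>j\<in>cob J. is_product C Y (D j) (Q j) (q1 j) (q2 j) \<Longrightarrow>
      L' \<in> cob C \<Longrightarrow> \<forall>j\<in>cob J. le (Q j) L' \<Longrightarrow> le P L'"
  shows "products_distribute_over_shape C J"
  unfolding products_distribute_over_shape_def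
proof (intro ballI allI impI; elim conjE)
  fix Y D Da L lam P p1 p2 Q q1 q2
  assume Y: "Y \<in> cob C" and D: "is_functor J C D Da" and L: "is_colimit C J D Da L lam"
    and P: "is_product C Y L P p1 p2" and Q: "\<forall>j\<in>cob J. is_product C Y (D j) (Q j) (q1 j) (q2 j)"
  have D_ob: "D j \<in> cob C" if "j \<in> cob J" for j
    using D that by (simp add: is_functor_def)
  have L_ob: "L \<in> cob C" and D_le_L: "\<And>j. j \<in> cob J \<Longrightarrow> le (D j) L" and lam: "\<And>j. j \<in> cob J \<Longrightarrow> lam j = r"
    using L by (auto simp: is_colimit_iff[OF D] is_cocone_iff[OF D])
  have P_ob: "P \<in> cob C" and p: "p1 = r" "p2 = r" and P_glb: "\<And>Z. Z \<in> cob C \<Longrightarrow> le Z Y \<Longrightarrow> le Z L \<Longrightarrow> le Z P"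
    using P Y L_ob by (auto simp: is_product_iff)
  have Q_ob: "Q j \<in> cob C" and q: "q1 j = r" "q2 j = r" and Q_le: "le (Q j) Y" "le (Q j) (D j)"
    and Q_glb: "\<And>Z. Z \<in> cob C \<Longrightarrow> le Z Y \<Longrightarrow> le Z (D j) \<Longrightarrow> le Z (Q j)" if "j \<in> cob J" for j
    using Q that Y D_ob[OF that] by (auto simp: is_product_iff)
  let ?Qa = "\<lambda>i j f. THE u. u \<in> chom C (Q i) (Q j) \<and> ccomp C (q1 j) u = q1 i \<and>
                           ccomp C (q2 j) u = ccomp C (Da i j f) (q2 i)"
  let ?mu = "\<lambda>j. THE u. u \<in> chom C (Q j) P \<and> ccomp C p1 u = q1 j \<and>
                      ccomp C p2 u = ccomp C (lam j) (q2 j)"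
  have Q_mono: "le (Q i) (Q j) \<and> ?Qa i j f = r" if "i \<in> cob J" "j \<in> cob J" "f \<in> chom J i j" for i j f
  proof -
    have "le (Q i) (D j)"
      using le_trans[OF Q_ob D_ob D_ob Q_le(2) functor_arrow_eq(2)[OF D that]] that by simp
    then have "le (Q i) (Q j)"
      using that Q_ob Q_le by (intro Q_glb) auto
    then show ?thesis
      using that Q_ob q functor_arrow_eq(1)[OF D that] by (simp add: the_chom_eq ccomp_eq)
  qed
  have Q_le_P: "le (Q j) P \<and> ?mu j = r" if "j \<in> cob J" for j
  proof -
    have "le (Q j) L"
      using le_trans[OF Q_ob D_ob L_ob Q_le(2) D_le_L] that by simp
    then have "le (Q j) P"
      using that Q_ob Q_le by (intro P_glb) auto
    then show ?thesis
      using that Q_ob P_ob p q lam by (simp add: the_chom_eq ccomp_eq)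
  qed
  have Q_functor: "is_functor J C Q ?Qa"
    using J Q_ob Q_mono by (rule is_functorI)
  show "is_colimit C J Q ?Qa P ?mu"
    using P_ob Q_le_P least[OF Y D L P Q]
    by (simp add: is_colimit_iff[OF Q_functor] is_cocone_iff[OF Q_functor])
qed

end

section \<open>Compact orthogonality of families of closed sets\<close>

definition perp :: "'a topology \<Rightarrow> 'a set set \<Rightarrow> 'a set set" where
  "perp X A = {S. closedin X S \<and> (\<forall>C\<in>A. compactin X (C \<inter> S))}"

definition perp_closed :: "'a topology \<Rightarrow> 'a set set \<Rightarrow> bool" where
  "perp_closed X F \<longleftrightarrow> perp X (perp X F) = F"

lemma perp_closedin: "S \<in> perp X A \<Longrightarrow> closedin X S"
  by (simp add: perp_def)

lemma perp_antimono: "A \<subseteq> B \<Longrightarrow> perp X B \<subseteq> perp X A"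
  by (auto simp: perp_def)

lemma perp_perp_mono: "A \<subseteq> B \<Longrightarrow> perp X (perp X A) \<subseteq> perp X (perp X B)"
  by (intro perp_antimono)

lemma subset_perp_perp: "A \<subseteq> Collect (closedin X) \<Longrightarrow> A \<subseteq> perp X (perp X A)"
  by (auto simp: perp_def Int_commute)

lemma perp_perp_perp: "A \<subseteq> Collect (closedin X) \<Longrightarrow> perp X (perp X (perp X A)) = perp X A"
  by (rule subset_antisym[OF perp_antimono[OF subset_perp_perp] subset_perp_perp])
    (auto dest: perp_closedin)

lemma perp_closed_perp_perp: "A \<subseteq> Collect (closedin X) \<Longrightarrow> perp_closed X (perp X (perp X A))"
  by (simp add: perp_closed_def perp_perp_perp)

lemma perp_perp_subset_iff:
  assumes "perp_closed X F" "A \<subseteq> Collect (closedin X)"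
  shows "perp X (perp X A) \<subseteq> F \<longleftrightarrow> A \<subseteq> F"
  using assms subset_perp_perp[OF assms(2)] perp_perp_mono[of A F X]
  by (auto simp: perp_closed_def)

lemma perp_closed_memI:
  assumes "perp_closed X F" "closedin X z" "\<And>S. S \<in> perp X F \<Longrightarrow> compactin X (S \<inter> z)"
  shows "z \<in> F"
proof -
  have "z \<in> perp X (perp X F)" using assms(2,3) by (simp add: perp_def)
  with assms(1) show ?thesis by (simp add: perp_closed_def)
qed

lemma perp_closed_memD:
  assumes "perp_closed X F" "z \<in> F" "S \<in> perp X F"
  shows "compactin X (S \<inter> z)"
proof -
  have "z \<in> perp X (perp X F)" using assms(1,2) by (simp add: perp_closed_def)
  with assms(3) show ?thesis by (simp add: perp_def)
qed

lemma perp_closed_closedin: "perp_closed X F \<Longrightarrow> C \<in> F \<Longrightarrow> closedin X C"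
  unfolding perp_closed_def by (blast dest: perp_closedin)

lemma perp_closed_compactin:
  "Hausdorff_space X \<Longrightarrow> perp_closed X F \<Longrightarrow> compactin X K \<Longrightarrow> K \<in> F"
  by (meson closed_Int_compactin compactin_imp_closedin perp_closed_memI perp_closedin)

lemma perp_closed_empty: "perp_closed X F \<Longrightarrow> {} \<in> F"
  by (rule perp_closed_memI) auto

lemma perp_closed_Un: "perp_closed X F \<Longrightarrow> C \<in> F \<Longrightarrow> D \<in> F \<Longrightarrow> C \<union> D \<in> F"
  by (rule perp_closed_memI)
    (auto simp: Int_Un_distrib compactin_Un perp_closed_memD perp_closed_closedin)

lemma perp_closed_Int_closedin:
  assumes "perp_closed X F" "C \<in> F" "closedin X D"
  shows "C \<inter> D \<in> F"
proof (rule perp_closed_memI[OF assms(1)])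
  show "closedin X (C \<inter> D)"
    using assms by (meson closedin_Int perp_closed_closedin)
  show "compactin X (S \<inter> (C \<inter> D))" if "S \<in> perp X F" for S
  proof -
    have "compactin X (S \<inter> C \<inter> D)"
      using compact_Int_closedin[OF perp_closed_memD[OF assms(1,2) that] assms(3)] .
    then show ?thesis by (simp add: inf_assoc)
  qed
qed

lemma perp_closed_closedin_all: "perp_closed X (Collect (closedin X))"
  unfolding perp_closed_def
  by (rule subset_antisym[OF _ subset_perp_perp]) (auto dest: perp_closedin)

lemma perp_closed_Inter:
  assumes "\<And>j. j \<in> I \<Longrightarrow> perp_closed X (B j)"
  shows "perp_closed X {C. closedin X C \<and> (\<forall>j\<in>I. C \<in> B j)}"
proof -
  let ?G = "{C. closedin X C \<and> (\<forall>j\<in>I. C \<in> B j)}"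
  have "perp X (perp X ?G) \<subseteq> B j" if "j \<in> I" for j
    using perp_perp_mono[of ?G "B j" X] assms[OF that] that by (auto simp: perp_closed_def)
  then have "perp X (perp X ?G) \<subseteq> ?G"
    by (auto dest: perp_closedin)
  moreover have "?G \<subseteq> perp X (perp X ?G)"
    by (rule subset_perp_perp) auto
  ultimately show ?thesis
    by (simp add: perp_closed_def)
qed

text \<open>The frame law behind the distributivity of products over colimits: for \<open>S \<in> perp X (A \<union> \<Inter>B)\<close>
  the set \<open>z \<inter> S\<close> belongs to every \<open>B j\<close>, because each \<open>u \<in> perp X (B j)\<close> yields
  \<open>u \<inter> S \<in> perp X (A \<union> B j)\<close>, which meets \<open>z\<close> compactly.\<close>
lemma perp_perp_Un_Inter:
  assumes A: "A \<subseteq> Collect (closedin X)" and B: "\<And>j. j \<in> I \<Longrightarrow> perp_closed X (B j)"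
    and z: "closedin X z" and zB: "\<And>j. j \<in> I \<Longrightarrow> z \<in> perp X (perp X (A \<union> B j))"
  shows "z \<in> perp X (perp X (A \<union> {C. closedin X C \<and> (\<forall>j\<in>I. C \<in> B j)}))"
proof -
  let ?G = "{C. closedin X C \<and> (\<forall>j\<in>I. C \<in> B j)}"
  have "compactin X (S \<inter> z)" if S: "S \<in> perp X (A \<union> ?G)" for S
  proof -
    have S_closed: "closedin X S" using S by (rule perp_closedin)
    have S_perp: "\<And>C. C \<in> A \<union> ?G \<Longrightarrow> compactin X (C \<inter> S)" using S by (simp add: perp_def)
    have zS_closed: "closedin X (z \<inter> S)" using z S_closed by (rule closedin_Int)
    have "z \<inter> S \<in> B j" if j: "j \<in> I" for j
    proof (rule perp_closed_memI[OF B[OF j] zS_closed])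
      fix u assume u: "u \<in> perp X (B j)"
      have "u \<inter> S \<in> perp X (A \<union> B j)"
        unfolding perp_def
      proof (intro CollectI conjI ballI)
        show "closedin X (u \<inter> S)" using perp_closedin[OF u] S_closed by (rule closedin_Int)
        fix C assume C: "C \<in> A \<union> B j"
        have "closedin X (C \<inter> (u \<inter> S))"
          using C A perp_closed_closedin[OF B[OF j]] perp_closedin[OF u] S_closed by blast
        moreover have "compactin X (C \<inter> S) \<or> compactin X (C \<inter> u)"
          using C S_perp u by (auto simp: perp_def)
        ultimately show "compactin X (C \<inter> (u \<inter> S))"
          by (meson closed_compactin inf_le1 inf_le2 inf_mono order_refl)
      qed
      then have "compactin X (u \<inter> S \<inter> z)" using zB[OF j] by (simp add: perp_def)
      then show "compactin X (u \<inter> (z \<inter> S))" by (simp add: ac_simps)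
    qed
    then have "compactin X (z \<inter> S \<inter> S)" using zS_closed S_perp by blast
    then show ?thesis by (simp add: ac_simps)
  qed
  then show ?thesis using z by (simp add: perp_def)
qed

section \<open>The pointed extension defined by a family of closed sets\<close>

lemma vimage_Some_insert_None [simp]: "Some -` insert None A = Some -` A"
  by auto

definition family_open :: "'a topology \<Rightarrow> 'a set set \<Rightarrow> 'a option set \<Rightarrow> bool" where
  "family_open X F U \<longleftrightarrow> U \<subseteq> pt_carrier X \<and> openin X (Some -` U) \<and>
     (None \<in> U \<longrightarrow> topspace X - Some -` U \<in> F)"

definition family_topology :: "'a topology \<Rightarrow> 'a set set \<Rightarrow> 'a option topology" where
  "family_topology X F = topology (family_open X F)"

lemma istopology_family_open:
  assumes F: "perp_closed X F"
  shows "istopology (family_open X F)"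
  unfolding istopology_def
proof (rule conjI; intro allI impI)
  fix S T assume "family_open X F S" "family_open X F T"
  moreover have "topspace X - Some -` (S \<inter> T) = (topspace X - Some -` S) \<union> (topspace X - Some -` T)"
    by auto
  ultimately show "family_open X F (S \<inter> T)"
    using perp_closed_Un[OF F] by (auto simp: family_open_def)
next
  fix K assume K: "\<forall>U\<in>K. family_open X F U"
  have open_K: "openin X (Some -` \<Union>K)"
    using K by (auto simp: family_open_def vimage_Union)
  have "topspace X - Some -` \<Union>K \<in> F" if "U \<in> K" "None \<in> U" for U
  proof -
    have "topspace X - Some -` \<Union>K = (topspace X - Some -` U) \<inter> (topspace X - Some -` \<Union>K)"
      using that by auto
    moreover have "topspace X - Some -` U \<in> F"
      using K that by (simp add: family_open_def)
    ultimately show ?thesis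
      using open_K perp_closed_Int_closedin[OF F] by (metis closedin_diff closedin_topspace)
  qed
  then show "family_open X F (\<Union>K)"
    using K open_K by (auto simp: family_open_def)
qed

lemma openin_family_topology:
  "perp_closed X F \<Longrightarrow> openin (family_topology X F) U \<longleftrightarrow>
     U \<subseteq> pt_carrier X \<and> openin X (Some -` U) \<and> (None \<in> U \<longrightarrow> topspace X - Some -` U \<in> F)"
  unfolding family_topology_def by (simp add: istopology_family_open family_open_def)

lemma topspace_family_topology:
  assumes "perp_closed X F"
  shows "topspace (family_topology X F) = pt_carrier X"
proof -
  have "Some -` pt_carrier X = topspace X" by (auto simp: pt_carrier_def)
  then have "openin (family_topology X F) (pt_carrier X)"
    using assms by (simp add: openin_family_topology perp_closed_empty)
  then show ?thesis
    using assms by (metis openin_family_topology openin_subset openin_topspace subset_antisym)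
qed

lemma plus_top_eq_family_topology: "plus_top X = family_topology X (Collect (closedin X))"
  unfolding plus_top_def family_topology_def
  by (rule arg_cong[where f=topology], rule ext) (auto simp: family_open_def vimage_def closedin_diff)

lemma openin_family_topology_image_Some:
  "perp_closed X F \<Longrightarrow> openin (family_topology X F) (Some ` U) \<longleftrightarrow> openin X U"
  by (auto simp: openin_family_topology pt_carrier_def inj_vimage_image_eq dest: openin_subset)

lemma closedin_family_topology_image_Some:
  assumes F: "perp_closed X F" and C: "C \<subseteq> topspace X"
  shows "closedin (family_topology X F) (Some ` C) \<longleftrightarrow> C \<in> F"
proof -
  let ?U = "insert None (Some ` (topspace X - C))"
  have compl: "topspace (family_topology X F) - Some ` C = ?U"
    using F by (auto simp: topspace_family_topology pt_carrier_def)
  have "closedin (family_topology X F) (Some ` C) \<longleftrightarrow> openin (family_topology X F) ?U"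
    using F C compl by (auto simp: closedin_def topspace_family_topology pt_carrier_def)
  also have "\<dots> \<longleftrightarrow> openin X (topspace X - C) \<and> C \<in> F"
    using F C by (auto simp: openin_family_topology pt_carrier_def inj_vimage_image_eq Diff_Diff_Int Int_absorb1)
  also have "\<dots> \<longleftrightarrow> C \<in> F"
    using F by (auto simp: perp_closed_closedin openin_diff)
  finally show ?thesis .
qed

lemma embedding_map_Some_family_topology:
  assumes F: "perp_closed X F"
  shows "embedding_map X (family_topology X F) Some"
proof (rule injective_open_imp_embedding_map)
  show "continuous_map X (family_topology X F) Some"
    unfolding continuous_map_def
  proof (intro conjI allI impI)
    show "Some \<in> topspace X \<rightarrow> topspace (family_topology X F)"
      using F by (auto simp: topspace_family_topology pt_carrier_def)
    fix U assume "openin (family_topology X F) U"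
    moreover have "{x \<in> topspace X. Some x \<in> U} = Some -` U" if "openin X (Some -` U)"
      using openin_subset[OF that] by auto
    ultimately show "openin X {x \<in> topspace X. Some x \<in> U}"
      using F by (simp add: openin_family_topology)
  qed
  show "open_map X (family_topology X F) Some"
    using F by (simp add: open_map_def openin_family_topology_image_Some)
qed simp

lemma compactin_family_topology_image_Some:
  assumes F: "perp_closed X F" and A: "A \<subseteq> topspace X"
  shows "compactin (family_topology X F) (Some ` A) \<longleftrightarrow> compactin X A"
proof -
  have "homeomorphic_map X (subtopology (family_topology X F) (Some ` topspace X)) Some"
    using embedding_map_Some_family_topology[OF F] by (simp add: embedding_map_def)
  from homeomorphic_map_compactness[OF this A] show ?thesis
    using A by (auto simp: compactin_subtopology)
qed

text \<open>A cover has a member \<open>U\<close> containing the basepoint,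
  and the rest of \<open>t\<close> lies in the compact set \<open>(topspace X - Some -` U) \<inter> t\<close>.\<close>
lemma compactin_family_topology_insert_None:
  assumes F: "perp_closed X F" and t: "t \<in> perp X F"
  shows "compactin (family_topology X F) (insert None (Some ` t))"
  unfolding compactin_def
proof (intro conjI allI impI)
  have t_sub: "t \<subseteq> topspace X"
    using closedin_subset[OF perp_closedin[OF t]] .
  then show "insert None (Some ` t) \<subseteq> topspace (family_topology X F)"
    using F by (auto simp: topspace_family_topology pt_carrier_def)
  fix \<U> assume \<U>: "(\<forall>U\<in>\<U>. openin (family_topology X F) U) \<and> insert None (Some ` t) \<subseteq> \<Union>\<U>"
  then obtain U0 where U0: "U0 \<in> \<U>" "None \<in> U0"
    by auto
  let ?c = "(topspace X - Some -` U0) \<inter> t"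
  have "topspace X - Some -` U0 \<in> F"
    using \<U> U0 F by (simp add: openin_family_topology)
  then have "compactin X ?c"
    using t by (simp add: perp_def)
  then have "compactin (family_topology X F) (Some ` ?c)"
    using compactin_family_topology_image_Some[OF F, of ?c] by auto
  moreover have "Some ` ?c \<subseteq> \<Union>\<U>"
    using \<U> by auto
  ultimately obtain \<V> where \<V>: "finite \<V>" "\<V> \<subseteq> \<U>" "Some ` ?c \<subseteq> \<Union>\<V>"
    using \<U> unfolding compactin_def by (metis (no_types, lifting))
  have "insert None (Some ` t) \<subseteq> \<Union>(insert U0 \<V>)"
    using U0 \<V>(3) t_sub by auto
  then show "\<exists>\<F>. finite \<F> \<and> \<F> \<subseteq> \<U> \<and> insert None (Some ` t) \<subseteq> \<Union>\<F>"
    using \<V> U0 by (intro exI[of _ "insert U0 \<V>"]) auto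
qed

text \<open>Compact sets lie in every \<open>\<bottom>\<bottom>\<close>-closed family, so the complement of a compact
  neighbourhood of \<open>x\<close> is a neighbourhood of the basepoint.\<close>
lemma family_topology_separates_basepoint:
  assumes lc: "locally_compact_space X" and H: "Hausdorff_space X" and F: "perp_closed X F"
    and x: "x \<in> topspace X"
  shows "\<exists>U V. openin (family_topology X F) U \<and> openin (family_topology X F) V \<and>
           Some x \<in> U \<and> None \<in> V \<and> disjnt U V"
proof -
  obtain U K where UK: "openin X U" "compactin X K" "x \<in> U" "U \<subseteq> K"
    using lc x unfolding locally_compact_space_def by blast
  have K_closed: "closedin X K"
    using UK(2) H compactin_imp_closedin by blast
  have "K \<in> F"
    using perp_closed_compactin[OF H F UK(2)] .
  then have "openin (family_topology X F) (insert None (Some ` (topspace X - K)))"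
    using F K_closed closedin_subset[OF K_closed]
    by (auto simp: openin_family_topology pt_carrier_def double_diff inj_vimage_image_eq)
  moreover have "openin (family_topology X F) (Some ` U)"
    using F UK(1) by (simp add: openin_family_topology_image_Some)
  ultimately show ?thesis
    using UK(3,4) by (intro exI[of _ "Some ` U"] exI[of _ "insert None (Some ` (topspace X - K))"])
      (auto simp: disjnt_def)
qed

lemma Hausdorff_space_family_topology:
  assumes lc: "locally_compact_space X" and H: "Hausdorff_space X" and F: "perp_closed X F"
  shows "Hausdorff_space (family_topology X F)"
proof -
  let ?T = "family_topology X F"
  note separate_None = family_topology_separates_basepoint[OF lc H F]
  have separate_Some: "\<exists>U V. openin ?T U \<and> openin ?T V \<and> Some x \<in> U \<and> Some y \<in> V \<and> disjnt U V"
    if xy: "x \<in> topspace X" "y \<in> topspace X" "x \<noteq> y" for x y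
  proof -
    obtain U V where "openin X U" "openin X V" "x \<in> U" "y \<in> V" "disjnt U V"
      using H xy unfolding Hausdorff_space_def by blast
    then show ?thesis
      using F by (intro exI[of _ "Some ` U"] exI[of _ "Some ` V"])
        (auto simp: openin_family_topology_image_Some disjnt_def)
  qed
  show ?thesis
    unfolding Hausdorff_space_def topspace_family_topology[OF F] pt_carrier_def
  proof (intro allI impI; elim conjE)
    fix p q assume "p \<in> insert None (Some ` topspace X)" "q \<in> insert None (Some ` topspace X)" "p \<noteq> q"
    then consider x where "p = None" "q = Some x" "x \<in> topspace X"
      | x where "p = Some x" "q = None" "x \<in> topspace X"
      | x y where "p = Some x" "q = Some y" "x \<in> topspace X" "y \<in> topspace X" "x \<noteq> y"
      by auto
    then show "\<exists>U V. openin ?T U \<and> openin ?T V \<and> p \<in> U \<and> q \<in> V \<and> disjnt U V"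
    proof cases
      case 1
      with separate_None[OF 1(3)] show ?thesis by (blast intro: disjnt_sym)
    next
      case 2
      with separate_None[OF 2(3)] show ?thesis by blast
    next
      case 3
      with separate_Some[OF 3(3-5)] show ?thesis by blast
    qed
  qed
qed

lemma compactin_vimage_Some_family_topology:
  assumes F: "perp_closed X F" and "compactin (family_topology X F) (Some ` A \<inter> S)"
    and "A \<subseteq> topspace X"
  shows "compactin X (A \<inter> Some -` S)"
proof -
  have "Some ` A \<inter> S = Some ` (A \<inter> Some -` S)"
    by auto
  then show ?thesis
    using assms compactin_family_topology_image_Some[OF F, of "A \<inter> Some -` S"] by auto
qed

lemma closedin_vimage_Some_family_topology:
  assumes lc: "locally_compact_space X" and H: "Hausdorff_space X" and F: "perp_closed X F"
    and S_sub: "S \<subseteq> topspace (family_topology X F)"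
    and S: "\<And>K. compactin (family_topology X F) K \<Longrightarrow> compactin (family_topology X F) (K \<inter> S)"
  shows "closedin X (Some -` S)"
proof -
  have "closedin (subtopology X K) (K \<inter> Some -` S)" if K: "compactin X K" for K
  proof -
    have K_sub: "K \<subseteq> topspace X"
      using K compactin_subset_topspace by blast
    then have "compactin (family_topology X F) (Some ` K)"
      using compactin_family_topology_image_Some[OF F K_sub] K by simp
    then have "compactin (family_topology X F) (Some ` K \<inter> S)"
      by (rule S)
    then have "compactin X (K \<inter> Some -` S)"
      by (rule compactin_vimage_Some_family_topology[OF F _ K_sub])
    then show ?thesis
      using H compactin_imp_closedin closedin_subset_topspace by blast
  qed
  moreover have "Some -` S \<subseteq> topspace X"
    using S_sub F by (auto simp: topspace_family_topology pt_carrier_def)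
  ultimately show ?thesis
    using locally_compact_imp_k_space[OF lc] unfolding k_space by blast
qed

text \<open>If \<open>S\<close> avoids the basepoint, its trace meets every \<open>t \<in> perp X F\<close> compactly because
  \<open>insert None (Some ` t)\<close> is compact, so the trace lies in \<open>F\<close>.\<close>
lemma k_space_family_topology:
  assumes lc: "locally_compact_space X" and H: "Hausdorff_space X" and F: "perp_closed X F"
  shows "k_space (family_topology X F)"
  unfolding k_space
proof (intro allI impI, elim conjE)
  let ?T = "family_topology X F"
  fix S assume S_sub: "S \<subseteq> topspace ?T"
    and S_k: "\<forall>K. compactin ?T K \<longrightarrow> closedin (subtopology ?T K) (K \<inter> S)"
  have compact_Int_S: "compactin ?T (K \<inter> S)" if K: "compactin ?T K" for K
  proof -
    have "closedin ?T K"
      using Hausdorff_space_family_topology[OF lc H F] K compactin_imp_closedin by blast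
    then have "closedin ?T (K \<inter> S)"
      using S_k K closedin_trans_full by blast
    then show ?thesis
      using K closed_compactin by blast
  qed
  let ?S = "Some -` S"
  have trace_closed: "closedin X ?S"
    using lc H F S_sub compact_Int_S by (rule closedin_vimage_Some_family_topology)
  have S_carrier: "S \<subseteq> pt_carrier X"
    using S_sub F by (simp add: topspace_family_topology)
  then have S_trace_sub: "?S \<subseteq> topspace X"
    by (auto simp: pt_carrier_def)
  show "closedin ?T S"
  proof (cases "None \<in> S")
    case True
    have "topspace ?T - S = Some ` (topspace X - ?S)"
      using F S_carrier True by (auto simp: topspace_family_topology pt_carrier_def)
    moreover have "openin ?T (Some ` (topspace X - ?S))"
      using F trace_closed by (simp add: openin_family_topology_image_Some closedin_def)
    ultimately show ?thesis
      using S_sub by (simp add: closedin_def)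
  next
    case False
    have "?S \<in> F"
    proof (rule perp_closed_memI[OF F trace_closed])
      fix t assume t: "t \<in> perp X F"
      have "compactin ?T (insert None (Some ` t) \<inter> S)"
        using compact_Int_S[OF compactin_family_topology_insert_None[OF F t]] .
      moreover have "insert None (Some ` t) \<inter> S = Some ` t \<inter> S"
        using False by auto
      ultimately have "compactin ?T (Some ` t \<inter> S)"
        by simp
      then show "compactin X (t \<inter> ?S)"
        using closedin_subset[OF perp_closedin[OF t]] by (rule compactin_vimage_Some_family_topology[OF F])
    qed
    moreover have "S = Some ` ?S"
      using S_carrier False by (auto simp: pt_carrier_def)
    ultimately show ?thesis
      using closedin_family_topology_image_Some[OF F S_trace_sub] by simp
  qed
qed

lemma pointed_extension_family_topology:
  assumes lc: "locally_compact_space X" and H: "Hausdorff_space X" and F: "perp_closed X F"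
  shows "pointed_extension X (family_topology X F)"
  unfolding pointed_extension_def
proof (intro conjI)
  show "topspace (family_topology X F) = pt_carrier X"
    using F by (rule topspace_family_topology)
  show "Hausdorff_space (family_topology X F)"
    using lc H F by (rule Hausdorff_space_family_topology)
  show "k_space (family_topology X F)"
    using lc H F by (rule k_space_family_topology)
  show "embedding_map X (family_topology X F) Some"
    using F by (rule embedding_map_Some_family_topology)
  have "openin (plus_top X) U" if "openin (family_topology X F) U" for U
    using that F perp_closed_closedin_all[of X]
    by (auto simp: plus_top_eq_family_topology openin_family_topology closedin_diff)
  moreover have "topspace (family_topology X F) = topspace (plus_top X)"
    using F perp_closed_closedin_all[of X]
    by (simp add: plus_top_eq_family_topology topspace_family_topology)
  ultimately show "continuous_map (plus_top X) (family_topology X F) (\<lambda>p. p)"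
    using topology_finer_continuous_id[unfolded id_def] by blast
qed

definition closed_family :: "'a topology \<Rightarrow> 'a option topology \<Rightarrow> 'a set set" where
  "closed_family X T = {C. C \<subseteq> topspace X \<and> closedin T (Some ` C)}"

lemma closed_family_family_topology:
  assumes F: "perp_closed X F"
  shows "closed_family X (family_topology X F) = F"
  using closedin_family_topology_image_Some[OF F] closedin_subset[OF perp_closed_closedin[OF F]]
  by (auto simp: closed_family_def)

section \<open>Pointed extensions are determined by their closed families\<close>

locale pointed_ext =
  fixes X :: "'a topology" and T :: "'a option topology"
  assumes pointed_extension: "pointed_extension X T"
begin

lemma topspace_eq: "topspace T = pt_carrier X"
  using pointed_extension by (simp add: pointed_extension_def)

lemma Hausdorff_space_T: "Hausdorff_space T"
  using pointed_extension by (simp add: pointed_extension_def)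

lemma k_space_T: "k_space T"
  using pointed_extension by (simp add: pointed_extension_def)

lemma homeomorphic_map_Some: "homeomorphic_map X (subtopology T (Some ` topspace X)) Some"
  using pointed_extension by (simp add: pointed_extension_def embedding_map_def)

lemma continuous_map_Some: "continuous_map X T Some"
  using homeomorphic_imp_continuous_map[OF homeomorphic_map_Some] continuous_map_in_subtopology
  by blast

lemma openin_image_Some_topspace: "openin T (Some ` topspace X)"
proof -
  have "closedin T {None}"
    using Hausdorff_space_T by (rule closedin_Hausdorff_singleton) (simp add: topspace_eq pt_carrier_def)
  then have "openin T (topspace T - {None})"
    by (rule openin_diff[OF openin_topspace])
  moreover have "topspace T - {None} = Some ` topspace X"
    by (auto simp: topspace_eq pt_carrier_def)
  ultimately show ?thesis
    by simp
qed

lemma openin_image_Some: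
  assumes "A \<subseteq> topspace X"
  shows "openin T (Some ` A) \<longleftrightarrow> openin X A"
proof -
  have "openin (subtopology T (Some ` topspace X)) (Some ` A) \<longleftrightarrow> openin X A"
    by (rule homeomorphic_map_openness[OF homeomorphic_map_Some assms])
  then show ?thesis
    using openin_open_subtopology[OF openin_image_Some_topspace] assms by auto
qed

lemma compactin_image_Some: "A \<subseteq> topspace X \<Longrightarrow> compactin T (Some ` A) \<longleftrightarrow> compactin X A"
  using homeomorphic_map_compactness[OF homeomorphic_map_Some] by (auto simp: compactin_subtopology)

lemma closed_family_closedin: "C \<in> closed_family X T \<Longrightarrow> closedin X C"
proof -
  assume "C \<in> closed_family X T"
  then have "C \<subseteq> topspace X" "closedin (subtopology T (Some ` topspace X)) (Some ` C)"
    by (auto simp: closed_family_def closedin_subset_topspace image_mono)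
  then show ?thesis
    using homeomorphic_map_closedness[OF homeomorphic_map_Some] by blast
qed

lemma vimage_Some_compactin_perp:
  assumes K: "compactin T K"
  shows "Some -` K \<in> perp X (closed_family X T)"
  unfolding perp_def
proof (intro CollectI conjI ballI)
  have K_closed: "closedin T K"
    using Hausdorff_space_T K by (rule compactin_imp_closedin)
  moreover have "{x \<in> topspace X. Some x \<in> K} = Some -` K"
    using closedin_subset[OF K_closed] by (auto simp: topspace_eq pt_carrier_def)
  ultimately show "closedin X (Some -` K)"
    using closedin_continuous_map_preimage[OF continuous_map_Some] by metis
  fix C assume C: "C \<in> closed_family X T"
  have "Some ` (C \<inter> Some -` K) = Some ` C \<inter> K"
    by auto
  moreover have "closedin T (Some ` C \<inter> K)"
    using C K_closed by (auto simp: closed_family_def)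
  ultimately have "compactin T (Some ` (C \<inter> Some -` K))"
    using closed_compactin[OF K] by auto
  then show "compactin X (C \<inter> Some -` K)"
    using C compactin_image_Some[of "C \<inter> Some -` K"] by (auto simp: closed_family_def)
qed

lemma perp_closed_closed_family: "perp_closed X (closed_family X T)"
proof -
  let ?P = "closed_family X T"
  have "z \<in> ?P" if z: "z \<in> perp X (perp X ?P)" for z
  proof -
    have z_sub: "z \<subseteq> topspace X"
      using closedin_subset[OF perp_closedin[OF z]] .
    have "closedin T (K \<inter> Some ` z)" if K: "compactin T K" for K
    proof -
      have "compactin X (Some -` K \<inter> z)"
        using z vimage_Some_compactin_perp[OF K] by (simp add: perp_def)
      moreover have "K \<inter> Some ` z = Some ` (Some -` K \<inter> z)"
        by auto
      ultimately have "compactin T (K \<inter> Some ` z)"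
        using compactin_image_Some[of "Some -` K \<inter> z"] z_sub by auto
      then show ?thesis
        using Hausdorff_space_T compactin_imp_closedin by blast
    qed
    then have "\<forall>K. compactin T K \<longrightarrow> closedin (subtopology T K) (K \<inter> Some ` z)"
      by (simp add: closedin_subset_topspace)
    moreover have "Some ` z \<subseteq> topspace T"
      using z_sub by (auto simp: topspace_eq pt_carrier_def)
    ultimately have "closedin T (Some ` z)"
      using k_space_T unfolding k_space by blast
    then show ?thesis
      using z_sub by (simp add: closed_family_def)
  qed
  moreover have "?P \<subseteq> perp X (perp X ?P)"
    using closed_family_closedin by (intro subset_perp_perp) blast
  ultimately show ?thesis
    unfolding perp_closed_def by blast
qed

lemma openin_iff_closed_family:
  "openin T U \<longleftrightarrow> U \<subseteq> pt_carrier X \<and> openin X (Some -` U) \<and>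
      (None \<in> U \<longrightarrow> topspace X - Some -` U \<in> closed_family X T)"
proof (cases "U \<subseteq> pt_carrier X")
  case U: True
  then have trace_sub: "Some -` U \<subseteq> topspace X"
    by (auto simp: pt_carrier_def)
  show ?thesis
  proof (cases "None \<in> U")
    case False
    then have "U = Some ` (Some -` U)"
      using U by (auto simp: pt_carrier_def)
    then have "openin T U \<longleftrightarrow> openin T (Some ` (Some -` U))"
      by (rule arg_cong)
    then show ?thesis
      using U False openin_image_Some[OF trace_sub] by simp
  next
    case True
    have "Some ` (topspace X - Some -` U) = topspace T - U"
      using U True by (auto simp: topspace_eq pt_carrier_def)
    then have "topspace X - Some -` U \<in> closed_family X T \<longleftrightarrow> closedin T (topspace T - U)"
      by (simp add: closed_family_def)
    also have "\<dots> \<longleftrightarrow> openin T U"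
      using U by (simp add: openin_closedin_eq topspace_eq)
    finally have "topspace X - Some -` U \<in> closed_family X T \<longleftrightarrow> openin T U" .
    moreover have "{x \<in> topspace X. Some x \<in> U} = Some -` U"
      using trace_sub by auto
    then have "openin T U \<Longrightarrow> openin X (Some -` U)"
      using openin_continuous_map_preimage[OF continuous_map_Some] by metis
    ultimately show ?thesis
      using U True by blast
  qed
next
  case False
  then show ?thesis
    using openin_subset topspace_eq by blast
qed

lemma family_topology_closed_family: "family_topology X (closed_family X T) = T"
  by (simp add: topology_eq openin_family_topology perp_closed_closed_family openin_iff_closed_family)

end

lemma continuous_map_id_iff_closed_family:
  assumes "pointed_extension X T" and "pointed_extension X T'"
  shows "continuous_map T T' (\<lambda>p. p) \<longleftrightarrow> closed_family X T' \<subseteq> closed_family X T"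
proof -
  interpret T: pointed_ext X T by (rule pointed_ext.intro) fact
  interpret T': pointed_ext X T' by (rule pointed_ext.intro) fact
  have "continuous_map T T' (\<lambda>p. p) \<longleftrightarrow> (\<forall>U. openin T' U \<longrightarrow> openin T U)"
    using topology_finer_continuous_id[of T' T] by (simp add: T.topspace_eq T'.topspace_eq id_def)
  also have "\<dots> \<longleftrightarrow> closed_family X T' \<subseteq> closed_family X T"
  proof
    assume "\<forall>U. openin T' U \<longrightarrow> openin T U"
    then show "closed_family X T' \<subseteq> closed_family X T"
      by (auto simp: closed_family_def closedin_def T.topspace_eq T'.topspace_eq)
  next
    assume "closed_family X T' \<subseteq> closed_family X T"
    then show "\<forall>U. openin T' U \<longrightarrow> openin T U"
      by (auto simp: T.openin_iff_closed_family T'.openin_iff_closed_family)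
  qed
  finally show ?thesis .
qed

section \<open>The category of pointed extensions\<close>

definition pt_id :: "'a topology \<Rightarrow> 'a option \<Rightarrow> 'a option" where
  "pt_id X = restrict (\<lambda>p. p) (pt_carrier X)"

lemma topspace_plus_top: "topspace (plus_top X) = pt_carrier X"
  by (simp add: plus_top_eq_family_topology topspace_family_topology perp_closed_closedin_all)

lemma chom_Point_eq:
  assumes T: "pointed_extension X T" and T': "pointed_extension X T'"
  shows "chom (Point X) T T' = (if closed_family X T' \<subseteq> closed_family X T then {pt_id X} else {})"
proof -
  interpret T: pointed_ext X T by (rule pointed_ext.intro) fact
  have fixes_carrier: "(\<forall>p\<in>topspace (plus_top X). f p = p) \<and> (\<forall>p. p \<notin> topspace T \<longrightarrow> f p = undefined)
      \<longleftrightarrow> f = pt_id X" for f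
    by (auto simp: topspace_plus_top T.topspace_eq pt_id_def restrict_def)
  have "continuous_map T T' (pt_id X) \<longleftrightarrow> continuous_map T T' (\<lambda>p. p)"
    by (metis (no_types, lifting) T.topspace_eq continuous_map_eq pt_id_def restrict_apply')
  then have "f \<in> chom (Point X) T T' \<longleftrightarrow> f = pt_id X \<and> closed_family X T' \<subseteq> closed_family X T" for f
    using fixes_carrier continuous_map_id_iff_closed_family[OF T T'] by (auto simp: Point_def)
  then show ?thesis
    by auto
qed

interpretation Point: thin_cat "Point X" "\<lambda>T T'. closed_family X T' \<subseteq> closed_family X T" "pt_id X"
  for X :: "'a topology"
proof
  fix T T' assume "T \<in> cob (Point X)" "T' \<in> cob (Point X)"
  then show "chom (Point X) T T' = (if closed_family X T' \<subseteq> closed_family X T then {pt_id X} else {})"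
    by (intro chom_Point_eq) (simp_all add: Point_def)
next
  fix T assume "T \<in> cob (Point X)"
  then show "cid (Point X) T = pt_id X"
    by (simp add: Point_def pt_id_def pointed_extension_def)
qed (auto simp: Point_def pt_id_def restrict_def)

lemma is_poset_cat_Point: "is_poset_cat (Point X)"
proof (rule Point.is_poset_catI)
  fix T T' assume "T \<in> cob (Point X)" "T' \<in> cob (Point X)"
    and "closed_family X T' \<subseteq> closed_family X T" "closed_family X T \<subseteq> closed_family X T'"
  then show "T = T'"
    using pointed_ext.family_topology_closed_family[of X T] pointed_ext.family_topology_closed_family[of X T']
    by (simp add: Point_def pointed_ext_def)
qed

lemma closed_family_subset_closedin:
  "T \<in> cob (Point X) \<Longrightarrow> closed_family X T \<subseteq> Collect (closedin X)"
  by (auto simp: Point_def pointed_ext_def intro: pointed_ext.closed_family_closedin)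

lemma perp_closed_closed_family_Point: "T \<in> cob (Point X) \<Longrightarrow> perp_closed X (closed_family X T)"
  by (simp add: Point_def pointed_ext_def pointed_ext.perp_closed_closed_family)

context
  fixes X :: "'a topology"
  assumes lc: "locally_compact_space X" and H: "Hausdorff_space X"
begin

lemma family_topology_in_Point: "perp_closed X F \<Longrightarrow> family_topology X F \<in> cob (Point X)"
  using pointed_extension_family_topology[OF lc H] by (simp add: Point_def)

lemma initial_object_Point: "initial_object (Point X) (family_topology X (Collect (closedin X)))"
  using family_topology_in_Point[OF perp_closed_closedin_all] closed_family_subset_closedin
  by (intro Point.initial_objectI) (simp_all add: closed_family_family_topology perp_closed_closedin_all)

lemma terminal_object_Point: "terminal_object (Point X) (family_topology X (perp X (perp X {})))"
proof (rule Point.terminal_objectI)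
  have F: "perp_closed X (perp X (perp X {}))"
    by (rule perp_closed_perp_perp) simp
  then show "family_topology X (perp X (perp X {})) \<in> cob (Point X)"
    by (rule family_topology_in_Point)
  fix T assume "T \<in> cob (Point X)"
  then show "closed_family X (family_topology X (perp X (perp X {}))) \<subseteq> closed_family X T"
    by (simp add: closed_family_family_topology[OF F] perp_perp_subset_iff
        perp_closed_closed_family_Point)
qed

lemma is_colimit_Point:
  assumes D: "is_functor J (Point X) D Da"
  defines "F \<equiv> {C. closedin X C \<and> (\<forall>j\<in>cob J. C \<in> closed_family X (D j))}"
  shows "is_colimit (Point X) J D Da (family_topology X F) (\<lambda>_. pt_id X)"
proof -
  have F: "perp_closed X F"
    unfolding F_def using D by (intro perp_closed_Inter) (simp add: is_functor_def perp_closed_closed_family_Point)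
  have "F \<subseteq> closed_family X (D j)" if "j \<in> cob J" for j
    using that by (auto simp: F_def)
  moreover have "closed_family X L' \<subseteq> F"
    if "L' \<in> cob (Point X)" "\<forall>j\<in>cob J. closed_family X L' \<subseteq> closed_family X (D j)" for L'
    using that closed_family_subset_closedin[OF that(1)] by (auto simp: F_def)
  ultimately show ?thesis
    using family_topology_in_Point[OF F]
    by (simp add: Point.is_colimit_iff[OF D] Point.is_cocone_iff[OF D]
        closed_family_family_topology[OF F])
qed

lemma closed_family_colimit:
  assumes D: "is_functor J (Point X) D Da" and L: "is_colimit (Point X) J D Da L lam"
  shows "closed_family X L = {C. closedin X C \<and> (\<forall>j\<in>cob J. C \<in> closed_family X (D j))}"
    (is "_ = ?F")
proof -
  have L0: "is_colimit (Point X) J D Da (family_topology X ?F) (\<lambda>_. pt_id X)"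
    using D by (rule is_colimit_Point)
  have "closed_family X L \<subseteq> closed_family X (family_topology X ?F)"
    "closed_family X (family_topology X ?F) \<subseteq> closed_family X L"
    using L L0 by (auto simp: Point.is_colimit_iff[OF D] Point.is_cocone_iff[OF D])
  moreover have "perp_closed X ?F"
    using D by (intro perp_closed_Inter) (simp add: is_functor_def perp_closed_closed_family_Point)
  ultimately show ?thesis
    by (simp add: closed_family_family_topology)
qed

lemma is_limit_Point:
  assumes D: "is_functor J (Point X) D Da"
  defines "F \<equiv> perp X (perp X (\<Union>j\<in>cob J. closed_family X (D j)))"
  shows "is_limit (Point X) J D Da (family_topology X F) (\<lambda>_. pt_id X)"
proof -
  have closed: "(\<Union>j\<in>cob J. closed_family X (D j)) \<subseteq> Collect (closedin X)"
    using D closed_family_subset_closedin by (auto simp: is_functor_def)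
  then have F: "perp_closed X F"
    unfolding F_def by (rule perp_closed_perp_perp)
  have "closed_family X (D j) \<subseteq> F" if "j \<in> cob J" for j
    using subset_perp_perp[OF closed] that by (auto simp: F_def)
  moreover have "F \<subseteq> closed_family X L'"
    if "L' \<in> cob (Point X)" "\<forall>j\<in>cob J. closed_family X (D j) \<subseteq> closed_family X L'" for L'
    using that closed by (auto simp: F_def perp_perp_subset_iff perp_closed_closed_family_Point)
  ultimately show ?thesis
    using family_topology_in_Point[OF F]
    by (simp add: Point.is_limit_iff[OF D] Point.is_cone_iff[OF D] closed_family_family_topology[OF F])
qed

lemma closed_family_product:
  assumes Y: "Y \<in> cob (Point X)" and L: "L \<in> cob (Point X)" and P: "is_product (Point X) Y L P p1 p2"
  shows "closed_family X P = perp X (perp X (closed_family X Y \<union> closed_family X L))"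
    (is "_ = ?F")
proof -
  have closed: "closed_family X Y \<union> closed_family X L \<subseteq> Collect (closedin X)"
    using Y L closed_family_subset_closedin by blast
  then have F: "perp_closed X ?F"
    by (rule perp_closed_perp_perp)
  have P_ob: "P \<in> cob (Point X)"
    and "closed_family X Y \<union> closed_family X L \<subseteq> closed_family X P"
    and glb: "\<And>Z. Z \<in> cob (Point X) \<Longrightarrow> closed_family X Y \<union> closed_family X L \<subseteq> closed_family X Z
      \<Longrightarrow> closed_family X P \<subseteq> closed_family X Z"
    using P by (auto simp: Point.is_product_iff[OF Y L])
  then have "?F \<subseteq> closed_family X P"
    using closed by (simp add: perp_perp_subset_iff perp_closed_closed_family_Point)
  moreover have "closed_family X P \<subseteq> ?F"
    using glb[OF family_topology_in_Point[OF F]] subset_perp_perp[OF closed]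
    by (simp add: closed_family_family_topology[OF F])
  ultimately show ?thesis
    by blast
qed

lemma products_distribute_over_shape_Point:
  assumes J: "category J"
  shows "products_distribute_over_shape (Point X) J"
proof (rule Point.products_distribute_over_shapeI[OF J])
  fix Y D Da L lam P p1 p2 Q q1 q2 L'
  assume Y: "Y \<in> cob (Point X)" and D: "is_functor J (Point X) D Da"
    and L: "is_colimit (Point X) J D Da L lam" and P: "is_product (Point X) Y L P p1 p2"
    and Q: "\<forall>j\<in>cob J. is_product (Point X) Y (D j) (Q j) (q1 j) (q2 j)"
    and L': "L' \<in> cob (Point X)" and le: "\<forall>j\<in>cob J. closed_family X L' \<subseteq> closed_family X (Q j)"
  have D_ob: "\<And>j. j \<in> cob J \<Longrightarrow> D j \<in> cob (Point X)"
    using D by (simp add: is_functor_def)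
  have L_ob: "L \<in> cob (Point X)"
    using L by (simp add: is_colimit_def is_cocone_def)
  have "z \<in> closed_family X P" if z: "z \<in> closed_family X L'" for z
  proof -
    have "z \<in> perp X (perp X (closed_family X Y \<union> closed_family X (D j)))" if "j \<in> cob J" for j
      using z le that Q closed_family_product[OF Y D_ob] by blast
    then have "z \<in> perp X (perp X (closed_family X Y \<union>
        {C. closedin X C \<and> (\<forall>j\<in>cob J. C \<in> closed_family X (D j))}))"
      using z L' Y D_ob closed_family_subset_closedin perp_closed_closed_family_Point
      by (intro perp_perp_Un_Inter) blast+
    then show ?thesis
      by (simp add: closed_family_product[OF Y L_ob P] closed_family_colimit[OF D L])
  qed
  then show "closed_family X L' \<subseteq> closed_family X P"
    by blast
qed

end

theorem mainTheorem9:
  fixes X :: "'a topology"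
  assumes "locally_compact_space X" and "Hausdorff_space X"
  shows "category (Point X) \<and>
         is_poset_cat (Point X) \<and>
         (\<forall>J :: ('j, 'b) cat. category J \<longrightarrow> has_colimits_of_shape (Point X) J) \<and>
         (\<exists>I. initial_object (Point X) I) \<and>
         (\<forall>J :: ('j, 'b) cat. category J \<longrightarrow> has_limits_of_shape (Point X) J) \<and>
         (\<exists>T. terminal_object (Point X) T) \<and>
         (\<forall>J :: ('j, 'b) cat. category J \<longrightarrow> products_distribute_over_shape (Point X) J)"
  unfolding has_colimits_of_shape_def has_limits_of_shape_def
  using Point.category is_poset_cat_Point initial_object_Point[OF assms] terminal_object_Point[OF assms]
    is_colimit_Point[OF assms] is_limit_Point[OF assms] products_distribute_over_shape_Point[OF assms]
  by blast

end
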